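(* Let $G=(V,E)$ be a directed graph with non-negative integer edge weights $w$ (zero weights allowed), $x\in V$ a source and $h\ge1$. Run the following synchronous procedure (Algorithm 3): each vertex $v$ keeps a pair $(d^*(v),l^*(v))$, initialized to $(0,0)$ at $x$ and $(\infty,\infty)$ elsewhere; in each round $r=0,1,2,\dots$, every vertex $v$ with $\lceil d^*(v)\sqrt{h}+l^*(v)\rceil=r$ sends $(d^*(v),l^*(v))$ to all its neighbors; a vertex $v$ receiving $(d^-,l^-)$ from $y$ computes $d=d^-+w(y,v)$, $l=l^-+1$ and replaces its pair by $(d,l)$ if $d<d^*(v)$, or $d=d^*(v)$ and $l<l^*(v)$. Let $\pi$ be a path with the minimum number of hops among all $h$-hop shortest paths from $x$ to $v$, and let $\pi$ have $l^*$ hops and weight $d^*$. If $v$ receives the message that gives it the pair $(d^*,l^* )$ in round $r$, then $r<\lceil d^*\sqrt{h}+l^*\rceil$.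
   Context: An $h$-hop shortest path from $x$ to $v$ is an $x$–$v$ path of minimum weight among all $x$–$v$ paths with at most $h$ edges. Messages sent in a round are received by the end of that round (synchronous message passing). *)

theory Defs
  imports Complex_Main
begin

(* A state pair (d,l); None encodes (\<infinity>,\<infinity>). *)
type_synonym state = "(nat \<times> nat) option"

definition better :: "nat \<times> nat \<Rightarrow> nat \<times> nat \<Rightarrow> bool" where
  "better p q \<longleftrightarrow> fst p < fst q \<or> (fst p = fst q \<and> snd p < snd q)"

definition upd :: "state \<Rightarrow> nat \<times> nat \<Rightarrow> state" where
  "upd s p = (case s of None \<Rightarrow> Some p | Some q \<Rightarrow> if better p q then Some p else Some q)"

definition key :: "nat \<Rightarrow> nat \<times> nat \<Rightarrow> int" where
  "key h p = \<lceil>real (fst p) * sqrt (real h) + real (snd p)\<rceil>"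

(* candidate pairs v receives in round r, computed from the states at the start of round r *)
definition received :: "('a \<times> 'a) set \<Rightarrow> ('a \<times> 'a \<Rightarrow> nat) \<Rightarrow> nat \<Rightarrow> ('a \<Rightarrow> state) \<Rightarrow> nat \<Rightarrow> 'a \<Rightarrow> (nat \<times> nat) set" where
  "received E w h S r v =
     {(d + w (y, v), l + 1) | y d l. (y, v) \<in> E \<and> S y = Some (d, l) \<and> key h (d, l) = int r}"

(* state after round r: all received messages processed with the replacement rule
   (the result is the lexicographic minimum, independent of processing order) *)
definition step :: "('a \<times> 'a) set \<Rightarrow> ('a \<times> 'a \<Rightarrow> nat) \<Rightarrow> nat \<Rightarrow> nat \<Rightarrow> ('a \<Rightarrow> state) \<Rightarrow> 'a \<Rightarrow> state" where
  "step E w h r S v =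
     (if received E w h S r v = {} then S v
      else upd (S v) (THE p. p \<in> received E w h S r v \<and>
                         (\<forall>q\<in>received E w h S r v. q = p \<or> better p q)))"

(* run S r = states at the start of round r *)
primrec run :: "('a \<times> 'a) set \<Rightarrow> ('a \<times> 'a \<Rightarrow> nat) \<Rightarrow> nat \<Rightarrow> 'a \<Rightarrow> nat \<Rightarrow> 'a \<Rightarrow> state" where
  "run E w h x 0 = (\<lambda>v. if v = x then Some (0, 0) else None)"
| "run E w h x (Suc r) = step E w h r (run E w h x r)"

definition is_path :: "('a \<times> 'a) set \<Rightarrow> 'a \<Rightarrow> 'a \<Rightarrow> 'a list \<Rightarrow> bool" where
  "is_path E x v ps \<longleftrightarrow> ps \<noteq> [] \<and> hd ps = x \<and> last ps = v \<and> distinct ps \<and>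
     (\<forall>i. Suc i < length ps \<longrightarrow> (ps ! i, ps ! Suc i) \<in> E)"

definition hops :: "'a list \<Rightarrow> nat" where
  "hops ps = length ps - 1"

definition pweight :: "('a \<times> 'a \<Rightarrow> nat) \<Rightarrow> 'a list \<Rightarrow> nat" where
  "pweight w ps = sum_list (map w (zip ps (tl ps)))"

definition h_hop_shortest :: "('a \<times> 'a) set \<Rightarrow> ('a \<times> 'a \<Rightarrow> nat) \<Rightarrow> nat \<Rightarrow> 'a \<Rightarrow> 'a \<Rightarrow> 'a list \<Rightarrow> bool" where
  "h_hop_shortest E w h x v ps \<longleftrightarrow> is_path E x v ps \<and> hops ps \<le> h \<and>
     (\<forall>qs. is_path E x v qs \<and> hops qs \<le> h \<longrightarrow> pweight w ps \<le> pweight w qs)"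

end

theory Submission
  imports Defs
begin

text \<open>A pair that a vertex adopts in round \<open>r\<close> was sent by a neighbour whose pair \<open>(d, l)\<close>
  has sending round \<open>\<lceil>d \<surd>h + l\<rceil> = r\<close>; the adopted pair \<open>(d + w, l + 1)\<close> has weight at least
  \<open>d\<close> and one more hop, so its own sending round is at least \<open>r + 1\<close>. Hence the round of
  reception is strictly earlier than the sending round of the adopted pair.\<close>

lemma ex1_better_minimum:
  assumes "R \<noteq> {}"
  shows "\<exists>!p. p \<in> R \<and> (\<forall>q\<in>R. q = p \<or> better p q)"
proof -
  define d0 where "d0 = (LEAST d. \<exists>l. (d, l) \<in> R)"
  obtain a b where "(a, b) \<in> R" using assms by auto
  then have "\<exists>l. (d0, l) \<in> R"
    unfolding d0_def using LeastI[of "\<lambda>d. \<exists>l. (d, l) \<in> R" a] by blast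
  define l0 where "l0 = (LEAST l. (d0, l) \<in> R)"
  have min_in: "(d0, l0) \<in> R"
    unfolding l0_def using \<open>\<exists>l. (d0, l) \<in> R\<close> by (rule LeastI_ex)
  have min_better: "q = (d0, l0) \<or> better (d0, l0) q" if "q \<in> R" for q
  proof -
    obtain a b where q: "q = (a, b)" by fastforce
    have "d0 \<le> a" unfolding d0_def using that q by (metis Least_le)
    moreover have "a = d0 \<Longrightarrow> l0 \<le> b" unfolding l0_def using that q by (metis Least_le)
    ultimately show ?thesis using q unfolding better_def by (cases "a = d0") auto
  qed
  show ?thesis
  proof (rule ex1I[of _ "(d0, l0)"])
    fix p assume p: "p \<in> R \<and> (\<forall>q\<in>R. q = p \<or> better p q)"
    then have "(d0, l0) = p \<or> better p (d0, l0)" using min_in by blast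
    moreover have "p = (d0, l0) \<or> better (d0, l0) p" using p min_better by blast
    ultimately show "p = (d0, l0)" unfolding better_def by auto
  qed (use min_in min_better in blast)
qed

lemma step_changed_in_received:
  assumes "step E w h r S v \<noteq> S v"
  obtains p where "p \<in> received E w h S r v" and "step E w h r S v = Some p"
proof -
  define R where "R = received E w h S r v"
  define P where "P = (THE p. p \<in> R \<and> (\<forall>q\<in>R. q = p \<or> better p q))"
  have "R \<noteq> {}" using assms unfolding step_def R_def by auto
  then have "P \<in> R" unfolding P_def using theI'[OF ex1_better_minimum] by blast
  moreover have "step E w h r S v = upd (S v) P"
    using \<open>R \<noteq> {}\<close> unfolding step_def R_def P_def by simp
  then have "step E w h r S v = Some P"
    using assms unfolding upd_def by (auto split: option.splits if_splits)
  ultimately show ?thesis using that unfolding R_def by blast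
qed

lemma round_less_key_received:
  assumes "p \<in> received E w h S r v"
  shows "int r < key h p"
proof -
  obtain y d l where p: "p = (d + w (y, v), l + 1)" and sent: "key h (d, l) = int r"
    using assms unfolding received_def by blast
  have "int r + 1 = \<lceil>real d * sqrt (real h) + real l + 1\<rceil>"
    using sent unfolding key_def by simp
  also have "\<dots> \<le> key h p"
    unfolding key_def p by (intro ceiling_mono) (simp add: distrib_right)
  finally show ?thesis by simp
qed

theorem lemma3p1:
  fixes V :: "'a set" and E :: "('a \<times> 'a) set" and w :: "'a \<times> 'a \<Rightarrow> nat"
    and x v :: 'a and h r :: nat and \<pi> :: "'a list"
  assumes "finite V" and "E \<subseteq> V \<times> V" and "x \<in> V" and "v \<in> V" and "h \<ge> 1"
    and "h_hop_shortest E w h x v \<pi>"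
    and "\<forall>\<rho>. h_hop_shortest E w h x v \<rho> \<longrightarrow> hops \<pi> \<le> hops \<rho>"
    and "run E w h x r v \<noteq> Some (pweight w \<pi>, hops \<pi>)"
    and "run E w h x (Suc r) v = Some (pweight w \<pi>, hops \<pi>)"
  shows "int r < \<lceil>real (pweight w \<pi>) * sqrt (real h) + real (hops \<pi>)\<rceil>"
proof -
  let ?S = "run E w h x r"
  have "step E w h r ?S v \<noteq> ?S v" using assms(8,9) by simp
  then obtain p where "p \<in> received E w h ?S r v" and "step E w h r ?S v = Some p"
    by (rule step_changed_in_received)
  then have "p = (pweight w \<pi>, hops \<pi>)" and "int r < key h p"
    using assms(9) round_less_key_received by auto
  then show ?thesis unfolding key_def by simp
qed

end
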